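(* The set of singular points of the singularity variety $V=0$ in $\mathbb{R}^{12}$ remains invariant under affine motions: for every invertible $2\times2$ real matrix $\mathbf{A}$ and every $\mathbf{a}\in\mathbb{R}^2$, the map $(\mathbf{k}'_1,\dots,\mathbf{k}'_6)\mapsto(\mathbf{A}\mathbf{k}'_1+\mathbf{a},\dots,\mathbf{A}\mathbf{k}'_6+\mathbf{a})$ maps singular points of $V=0$ to singular points of $V=0$ (and regular points to regular points).
   Context: A configuration is $K'=(\mathbf{k}'_1,\dots,\mathbf{k}'_6)$ with $\mathbf{k}'_i=(c_i,d_i)^T\in\mathbb{R}^2$, viewed as a point of $\mathbb{R}^{12}$. The singularity polynomial is $V(K')=\det\mathbf{V}(K')$, where $\mathbf{V}(K')$ is the $3\times3$ matrix whose $i$-th column ($i=1,2,3$) consists of the two coordinates of $\mathbf{k}'_{i+3}-\mathbf{k}'_i$ followed by the entry $\det(\mathbf{k}'_i,\mathbf{k}'_{i+3}-\mathbf{k}'_i)$ (the $2\times2$ determinant of the two column vectors). A singular point of the hypersurface $V=0$ is a point of $\mathbb{R}^{12}$ where $V$ and all its partial derivatives with respect to $c_1,\dots,c_6,d_1,\dots,d_6$ vanish. *)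

theory Defs
  imports "HOL-Analysis.Analysis"
begin

text \<open>A configuration K' = (k'_1,...,k'_6) is represented as a function
  K :: nat => real^2; only the values K 1, ..., K 6 are relevant.
  The coordinates of k'_i are c_i = K i $ 1 and d_i = K i $ 2.\<close>

type_synonym config = "nat \<Rightarrow> real^2"

definition det2 :: "real^2 \<Rightarrow> real^2 \<Rightarrow> real" where
  "det2 u w = u$1 * w$2 - u$2 * w$1"

definition Vmat :: "config \<Rightarrow> real^3^3" where
  "Vmat K = (let w1 = K 4 - K 1; w2 = K 5 - K 2; w3 = K 6 - K 3 in
     vector [vector [w1$1, w2$1, w3$1],
             vector [w1$2, w2$2, w3$2],
             vector [det2 (K 1) w1, det2 (K 2) w2, det2 (K 3) w3]])"

definition Vpoly :: "config \<Rightarrow> real" where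
  "Vpoly K = det (Vmat K)"

definition partial_vanishes :: "config \<Rightarrow> nat \<Rightarrow> 2 \<Rightarrow> bool" where
  "partial_vanishes K i j =
     ((\<lambda>t. Vpoly (K(i := K i + t *\<^sub>R axis j 1))) has_real_derivative 0) (at 0)"

definition singular_point :: "config \<Rightarrow> bool" where
  "singular_point K \<longleftrightarrow> Vpoly K = 0 \<and>
     (\<forall>i\<in>{1..6}. \<forall>j. partial_vanishes K i j)"

definition regular_point :: "config \<Rightarrow> bool" where
  "regular_point K \<longleftrightarrow> Vpoly K = 0 \<and> \<not> singular_point K"

end

theory Submission
  imports Defs
begin

text \<open>Under K' \<mapsto> A K' + a the matrix V(K') changes by row operations: its first two rows
  are multiplied by A, and its third row is multiplied by det A and shifted by a
  combination of the first two. Hence V(A K' + a) = (det A)^2 V(K').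
  Moreover V is affine in each single point k'_i, since k'_i enters only one
  column of V(K'), whose entries are affine in k'_i because det(k'_i, k'_i) = 0. So the partial
  derivatives of V with respect to k'_i vanish iff V does not change when k'_i is moved
  at all, and this condition is preserved by the affine motion because A is bijective.\<close>

lemma Vpoly_affine_image:
  fixes A :: "real^2^2"
  shows "Vpoly (\<lambda>i. A *v K i + a) = (det A)\<^sup>2 * Vpoly K"
  unfolding Vpoly_def Vmat_def Let_def det_3 det_2 det2_def
  by (simp add: matrix_vector_mult_def sum_2) algebra

lemma point_index_induct [consumes 1]:
  fixes i :: nat
  assumes "i \<in> {1..6}" "P 1" "P 2" "P 3" "P 4" "P 5" "P 6"
  shows "P i"
  using assms by (fastforce simp: numeral_eq_Suc le_Suc_eq)

lemma linear_Vpoly_fun_upd: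
  assumes "i \<in> {1..6}"
  shows "linear (\<lambda>v. Vpoly (K(i := K i + v)) - Vpoly K)"
proof (rule linearI)
  fix v w :: "real^2" and c :: real
  show "Vpoly (K(i := K i + (v + w))) - Vpoly K =
        Vpoly (K(i := K i + v)) - Vpoly K + (Vpoly (K(i := K i + w)) - Vpoly K)"
    using assms
    by (induct i rule: point_index_induct)
      (simp add: Vpoly_def Vmat_def Let_def det_3 det2_def; algebra)+
  show "Vpoly (K(i := K i + c *\<^sub>R v)) - Vpoly K = c *\<^sub>R (Vpoly (K(i := K i + v)) - Vpoly K)"
    using assms
    by (induct i rule: point_index_induct)
      (simp add: Vpoly_def Vmat_def Let_def det_3 det2_def; algebra)+
qed

lemma Vpoly_fun_upd_line_has_derivative:
  assumes "i \<in> {1..6}"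
  shows "((\<lambda>t. Vpoly (K(i := K i + t *\<^sub>R v))) has_real_derivative
           Vpoly (K(i := K i + v)) - Vpoly K) (at 0)"
proof -
  let ?slope = "Vpoly (K(i := K i + v)) - Vpoly K"
  have "Vpoly (K(i := K i + t *\<^sub>R v)) = Vpoly K + t * ?slope" for t
    using linear_scale[OF linear_Vpoly_fun_upd[OF assms, of K], of t v] by simp
  moreover have "((\<lambda>t. Vpoly K + t * ?slope) has_real_derivative ?slope) (at 0)"
    by (auto intro!: derivative_eq_intros)
  ultimately show ?thesis
    by simp
qed

lemma partial_vanishes_iff:
  assumes "i \<in> {1..6}"
  shows "partial_vanishes K i j \<longleftrightarrow> Vpoly (K(i := K i + axis j 1)) = Vpoly K"
  using Vpoly_fun_upd_line_has_derivative[OF assms, of K "axis j 1"] DERIV_unique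
  unfolding partial_vanishes_def by fastforce

lemma all_partials_vanish_iff:
  assumes "i \<in> {1..6}"
  shows "(\<forall>j. partial_vanishes K i j) \<longleftrightarrow> (\<forall>v. Vpoly (K(i := K i + v)) = Vpoly K)"
proof
  assume "\<forall>j. partial_vanishes K i j"
  then have "(\<lambda>v. Vpoly (K(i := K i + v)) - Vpoly K) = (\<lambda>v. 0)"
    by (intro linear_eq_stdbasis linear_Vpoly_fun_upd[OF assms] linear_zero)
      (auto simp: Basis_vec_def partial_vanishes_iff[OF assms])
  then show "\<forall>v. Vpoly (K(i := K i + v)) = Vpoly K"
    by (metis eq_iff_diff_eq_0)
qed (simp add: partial_vanishes_iff[OF assms])

lemma singular_point_iff:
  "singular_point K \<longleftrightarrow> Vpoly K = 0 \<and> (\<forall>i\<in>{1..6}. \<forall>v. Vpoly (K(i := K i + v)) = Vpoly K)"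
  unfolding singular_point_def using all_partials_vanish_iff by blast

lemma Vpoly_affine_image_fun_upd:
  fixes A :: "real^2^2"
  shows "Vpoly ((\<lambda>k. A *v K k + a)(i := A *v K i + a + A *v u)) =
         (det A)\<^sup>2 * Vpoly (K(i := K i + u))"
proof -
  have "(\<lambda>k. A *v K k + a)(i := A *v K i + a + A *v u) = (\<lambda>k. A *v (K(i := K i + u)) k + a)"
    by (simp add: fun_eq_iff matrix_vector_right_distrib)
  then show ?thesis
    by (simp only: Vpoly_affine_image)
qed

lemma singular_point_affine_image_iff:
  fixes A :: "real^2^2"
  assumes "invertible A"
  shows "singular_point (\<lambda>k. A *v K k + a) \<longleftrightarrow> singular_point K"
proof -
  let ?T = "\<lambda>k. A *v K k + a"
  have "det A \<noteq> 0"
    using assms invertible_det_nz by blast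
  have "surj ((*v) A)"
    using assms matrix_right_invertible_surjective unfolding invertible_def by blast
  then have all_image: "(\<forall>v. P v) \<longleftrightarrow> (\<forall>u. P (A *v u))" for P
    by (metis surjD)
  have "(\<forall>v. Vpoly (?T(i := ?T i + v)) = Vpoly ?T) \<longleftrightarrow> (\<forall>u. Vpoly (K(i := K i + u)) = Vpoly K)"
    for i
    unfolding all_image[where P = "\<lambda>v. Vpoly (?T(i := ?T i + v)) = Vpoly ?T"]
    using \<open>det A \<noteq> 0\<close> by (simp add: Vpoly_affine_image Vpoly_affine_image_fun_upd)
  then show ?thesis
    using \<open>det A \<noteq> 0\<close> unfolding singular_point_iff by (simp add: Vpoly_affine_image)
qed

lemma regular_point_affine_image_iff:
  fixes A :: "real^2^2"
  assumes "invertible A"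
  shows "regular_point (\<lambda>k. A *v K k + a) \<longleftrightarrow> regular_point K"
proof -
  have "det A \<noteq> 0"
    using assms invertible_det_nz by blast
  then show ?thesis
    using assms by (simp add: regular_point_def Vpoly_affine_image singular_point_affine_image_iff)
qed

theorem lemma3:
  fixes A :: "real^2^2" and a :: "real^2" and K :: config
  assumes "invertible A"
  shows "(singular_point K \<longrightarrow> singular_point (\<lambda>i. A *v K i + a)) \<and>
         (regular_point K \<longrightarrow> regular_point (\<lambda>i. A *v K i + a))"
  using singular_point_affine_image_iff[OF assms] regular_point_affine_image_iff[OF assms]
  by blast

end
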